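(* Under the thermodynamic assumptions (TA) below, for every state $\mathbf z\in\mathcal Z$ the operator $\mathcal R^{(E)}(\mathbf z)\colon W^{1,3}(\Omega)^{\nu+4}\to(W^{1,3}(\Omega)^{\nu+4})^\ast$ is self-adjoint ($\langle\boldsymbol\varphi,\mathcal R^{(E)}\boldsymbol\psi\rangle=\langle\boldsymbol\psi,\mathcal R^{(E)}\boldsymbol\varphi\rangle$) and semi-elliptic ($\langle\boldsymbol\varphi,\mathcal R^{(E)}\boldsymbol\varphi\rangle\ge0$), and it satisfies the non-interaction condition $\mathcal R^{(E)}(\mathbf z)\frac{\delta H}{\delta\mathbf z}=0$, where $\frac{\delta H}{\delta\mathbf z}=\big(-\tfrac{\mathbf v\cdot\mathbf v}{2}+\mu_1,\dots,-\tfrac{\mathbf v\cdot\mathbf v}{2}+\mu_\nu,\ \mathbf v,\ T\big)$ is the functional derivative of $H(\mathbf z)=\int_\Omega\frac{\mathbf M\cdot\mathbf M}{2\rho}+u(\rho_1,\dots,\rho_\nu,s)\,dx$ (assumed to lie in $W^{1,3}(\Omega)^{\nu+4}$).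
   Context: Let $\Omega\subset\mathbb R^3$ be a bounded Lipschitz domain; Cartesian coordinates. Fix $\nu\ge2$. States $\mathbf z=(\rho_1,\dots,\rho_\nu,\mathbf M,s)\in W^{1,3}(\Omega)^{\nu+4}$, $\mathcal Z$ = states with $\rho:=\sum_\alpha\rho_\alpha\ge\varrho>0$ a.e.; $\mathbf v=\mathbf M/\rho$, $(\nabla\mathbf w)_{ij}=\partial_jw_i$, $\mathbf D=\frac12(\nabla\mathbf v+\nabla\mathbf v^\top)$. A smooth internal energy density $u(\rho_1,\dots,\rho_\nu,s)$ is given; $T=\partial u/\partial s$, $\mu_\alpha=\partial u/\partial\rho_\alpha$ (evaluated at the state). Coefficient functions $\lambda,\zeta,\kappa,B_\alpha,B_{\alpha\beta},\mathbb L_{\alpha\beta}$ ($\alpha,\beta=1..\nu$) on $\Omega$ with $\mathbb L_{\alpha\beta}\in L^{1+\varepsilon}(\Omega)$, $\lambda,\kappa,\zeta,B_\alpha,B_{\alpha\beta}\in L^{3+\varepsilon}(\Omega)$, $\varepsilon>0$, and $T,1/T,\mu_\alpha$ regular enough that all integrals below are finite. Thermodynamic assumptions (TA): $T>0$, $\zeta\ge0$, $\lambda\ge0$; $B_{\alpha\beta}=B_{\beta\alpha}$, $\mathbb L_{\alpha\beta}=\mathbb L_{\beta\alpha}$; the $(\nu+1)\times(\nu+1)$ matrix $\mathfrak B$ with $\mathfrak B_{00}=\kappa T^2$, $\mathfrak B_{0\alpha}=\mathfrak B_{\alpha0}=B_\alpha$, $\mathfrak B_{\alpha\beta}=B_{\alpha\beta}$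 and the matrix $(\mathbb L_{\alpha\beta})$ are pointwise positive semidefinite; $\sum_\beta B_\beta=0$, and $\sum_\beta B_{\alpha\beta}=\sum_\beta\mathbb L_{\alpha\beta}=0$ for every $\alpha$. For $\boldsymbol\varphi=(\varphi_{\rho_1},..,\varphi_{\rho_\nu},\varphi_{\mathbf M},\varphi_s)$, set $X_0(\boldsymbol\varphi)=\nabla(\varphi_s/T)$, $X_\alpha(\boldsymbol\varphi)=\nabla(\varphi_{\rho_\alpha}-\mu_\alpha\varphi_s/T)$. The operator $\mathcal R^{(E)}(\mathbf z)$ is defined by $$\langle\boldsymbol\varphi,\mathcal R^{(E)}\boldsymbol\psi\rangle=\int_\Omega\tfrac{\zeta T}{2}\operatorname{tr}\Big[\big(\nabla\varphi_{\mathbf M}+\nabla\varphi_{\mathbf M}^\top-\tfrac{2}{T}\mathbf D\varphi_s\big)\big(\nabla\psi_{\mathbf M}+\nabla\psi_{\mathbf M}^\top-\tfrac{2}{T}\mathbf D\psi_s\big)\Big]$$ $$+T\big(\lambda-\tfrac{2\zeta}{3}\big)\big(\operatorname{div}\varphi_{\mathbf M}-\tfrac1T\operatorname{div}\mathbf v\,\varphi_s\big)\big(\operatorname{div}\psi_{\mathbf M}-\tfrac1T\operatorname{div}\mathbf v\,\psi_s\big)+\sum_{a,b=0}^{\nu}\mathfrak B_{ab}X_a(\boldsymbol\varphi)\cdot X_b(\boldsymbol\psi)+T\sum_{\alpha,\beta=1}^\nu\big(\varphi_{\rho_\alpha}-\tfrac{\mu_\alpha}{T}\varphi_s\big)\mathbb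 L_{\alpha\beta}\big(\psi_{\rho_\beta}-\tfrac{\mu_\beta}{T}\psi_s\big)dx.$$ *)

theory Defs
  imports "HOL-Analysis.Analysis"
begin

type_synonym pt = "real^3"

fun Ck :: "nat \<Rightarrow> ('a::euclidean_space \<Rightarrow> real) \<Rightarrow> bool" where
  "Ck 0 f \<longleftrightarrow> continuous_on UNIV f"
| "Ck (Suc n) f \<longleftrightarrow> (\<forall>x. f differentiable (at x)) \<and>
      (\<forall>b\<in>Basis. Ck n (\<lambda>x. frechet_derivative f (at x) b))"

definition smooth_fun :: "('a::euclidean_space \<Rightarrow> real) \<Rightarrow> bool" where
  "smooth_fun f \<longleftrightarrow> (\<forall>n. Ck n f)"

definition lipschitz_domain :: "pt set \<Rightarrow> bool" where
  "lipschitz_domain \<Omega> \<longleftrightarrow> open \<Omega> \<and> connected \<Omega> \<and> \<Omega> \<noteq> {} \<and> bounded \<Omega> \<and>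
    (\<forall>x\<in>frontier \<Omega>. \<exists>r>0. \<exists>Q::real^3^3. orthogonal_matrix Q \<and>
       (\<exists>h::real^2 \<Rightarrow> real. (\<exists>L. L-lipschitz_on UNIV h) \<and>
          (\<forall>y\<in>ball x r. y \<in> \<Omega> \<longleftrightarrow>
              (Q *v (y - x)) $ 3 < h (vector [(Q *v (y - x)) $ 1, (Q *v (y - x)) $ 2]))))"

definition partial :: "(pt \<Rightarrow> real) \<Rightarrow> 3 \<Rightarrow> pt \<Rightarrow> real" where
  "partial \<phi> i x = frechet_derivative \<phi> (at x) (axis i 1)"

definition test_fun :: "pt set \<Rightarrow> (pt \<Rightarrow> real) \<Rightarrow> bool" where
  "test_fun \<Omega> \<phi> \<longleftrightarrow> smooth_fun \<phi> \<and> compact (closure {x. \<phi> x \<noteq> 0}) \<and>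
                     closure {x. \<phi> x \<noteq> 0} \<subseteq> \<Omega>"

definition is_weak_grad :: "pt set \<Rightarrow> (pt \<Rightarrow> real) \<Rightarrow> (pt \<Rightarrow> real^3) \<Rightarrow> bool" where
  "is_weak_grad \<Omega> f g \<longleftrightarrow>
     (\<forall>K. compact K \<and> K \<subseteq> \<Omega> \<longrightarrow>
        set_integrable lebesgue K f \<and> (\<forall>i. set_integrable lebesgue K (\<lambda>x. g x $ i))) \<and>
     (\<forall>\<phi>. test_fun \<Omega> \<phi> \<longrightarrow> (\<forall>i.
        (LINT x:\<Omega>|lebesgue. f x * partial \<phi> i x) = - (LINT x:\<Omega>|lebesgue. g x $ i * \<phi> x)))"

text \<open>The weak gradient (a representative; determined up to null sets).\<close>
definition wgrad :: "pt set \<Rightarrow> (pt \<Rightarrow> real) \<Rightarrow> pt \<Rightarrow> real^3" where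
  "wgrad \<Omega> f = (SOME g. is_weak_grad \<Omega> f g)"

definition Lp :: "pt set \<Rightarrow> real \<Rightarrow> (pt \<Rightarrow> real) \<Rightarrow> bool" where
  "Lp \<Omega> p f \<longleftrightarrow> set_borel_measurable lebesgue \<Omega> f \<and>
                 set_integrable lebesgue \<Omega> (\<lambda>x. \<bar>f x\<bar> powr p)"

definition W13 :: "pt set \<Rightarrow> (pt \<Rightarrow> real) \<Rightarrow> bool" where
  "W13 \<Omega> f \<longleftrightarrow> Lp \<Omega> 3 f \<and> (\<exists>g. is_weak_grad \<Omega> f g \<and> (\<forall>i. Lp \<Omega> 3 (\<lambda>x. g x $ i)))"

datatype 'k fld = Fld (rho: "'k \<Rightarrow> pt \<Rightarrow> real") (mom: "pt \<Rightarrow> real^3") (ent: "pt \<Rightarrow> real")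

definition in_W13 :: "pt set \<Rightarrow> 'k::finite fld \<Rightarrow> bool" where
  "in_W13 \<Omega> z \<longleftrightarrow> (\<forall>\<alpha>. W13 \<Omega> (rho z \<alpha>)) \<and> (\<forall>i. W13 \<Omega> (\<lambda>x. mom z x $ i)) \<and> W13 \<Omega> (ent z)"

definition total_rho :: "'k::finite fld \<Rightarrow> pt \<Rightarrow> real" where
  "total_rho z x = (\<Sum>\<alpha>\<in>UNIV. rho z \<alpha> x)"

definition vel :: "'k::finite fld \<Rightarrow> pt \<Rightarrow> real^3" where
  "vel z x = (1 / total_rho z x) *\<^sub>R mom z x"

text \<open>(grad w)_{ij} = d_j w_i\<close>
definition grad_vec :: "pt set \<Rightarrow> (pt \<Rightarrow> real^3) \<Rightarrow> pt \<Rightarrow> real^3^3" where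
  "grad_vec \<Omega> w x = (\<chi> i j. wgrad \<Omega> (\<lambda>y. w y $ i) x $ j)"

definition divg :: "pt set \<Rightarrow> (pt \<Rightarrow> real^3) \<Rightarrow> pt \<Rightarrow> real" where
  "divg \<Omega> w x = trace (grad_vec \<Omega> w x)"

definition Dmat :: "pt set \<Rightarrow> 'k::finite fld \<Rightarrow> pt \<Rightarrow> real^3^3" where
  "Dmat \<Omega> z x = (1/2) *\<^sub>R (grad_vec \<Omega> (vel z) x + transpose (grad_vec \<Omega> (vel z) x))"

definition rho_vec :: "'k::finite fld \<Rightarrow> pt \<Rightarrow> real^'k" where
  "rho_vec z x = (\<chi> \<alpha>. rho z \<alpha> x)"

definition temp :: "(real^'k \<Rightarrow> real \<Rightarrow> real) \<Rightarrow> 'k::finite fld \<Rightarrow> pt \<Rightarrow> real" where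
  "temp u z x = deriv (\<lambda>t. u (rho_vec z x) t) (ent z x)"

definition chem :: "(real^'k \<Rightarrow> real \<Rightarrow> real) \<Rightarrow> 'k::finite fld \<Rightarrow> 'k \<Rightarrow> pt \<Rightarrow> real" where
  "chem u z \<alpha> x = deriv (\<lambda>t. u (\<chi> \<beta>. if \<beta> = \<alpha> then t else rho z \<beta> x) (ent z x)) (rho z \<alpha> x)"

definition dH :: "(real^'k \<Rightarrow> real \<Rightarrow> real) \<Rightarrow> 'k::finite fld \<Rightarrow> 'k fld" where
  "dH u z = Fld (\<lambda>\<alpha> x. - (vel z x \<bullet> vel z x) / 2 + chem u z \<alpha> x) (vel z) (temp u z)"

text \<open>The (nu+1)x(nu+1) matrix frak B; index None plays the role of 0.\<close>
definition Bfrak :: "(pt \<Rightarrow> real) \<Rightarrow> (pt \<Rightarrow> real) \<Rightarrow> ('k \<Rightarrow> pt \<Rightarrow> real) \<Rightarrow>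
    ('k \<Rightarrow> 'k \<Rightarrow> pt \<Rightarrow> real) \<Rightarrow> 'k option \<Rightarrow> 'k option \<Rightarrow> pt \<Rightarrow> real" where
  "Bfrak \<kappa> T Bv Bm a b x = (case (a, b) of
      (None, None) \<Rightarrow> \<kappa> x * (T x)\<^sup>2
    | (None, Some \<beta>) \<Rightarrow> Bv \<beta> x
    | (Some \<alpha>, None) \<Rightarrow> Bv \<alpha> x
    | (Some \<alpha>, Some \<beta>) \<Rightarrow> Bm \<alpha> \<beta> x)"

definition Xf :: "pt set \<Rightarrow> (real^'k \<Rightarrow> real \<Rightarrow> real) \<Rightarrow> 'k::finite fld \<Rightarrow> 'k option \<Rightarrow> 'k fld \<Rightarrow> pt \<Rightarrow> real^3" where
  "Xf \<Omega> u z a \<phi> = (case a of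
      None \<Rightarrow> wgrad \<Omega> (\<lambda>y. ent \<phi> y / temp u z y)
    | Some \<alpha> \<Rightarrow> wgrad \<Omega> (\<lambda>y. rho \<phi> \<alpha> y - chem u z \<alpha> y * ent \<phi> y / temp u z y))"

definition RE_integrand :: "pt set \<Rightarrow> (real^'k \<Rightarrow> real \<Rightarrow> real) \<Rightarrow>
    (pt \<Rightarrow> real) \<Rightarrow> (pt \<Rightarrow> real) \<Rightarrow> (pt \<Rightarrow> real) \<Rightarrow> ('k \<Rightarrow> pt \<Rightarrow> real) \<Rightarrow>
    ('k \<Rightarrow> 'k \<Rightarrow> pt \<Rightarrow> real) \<Rightarrow> ('k \<Rightarrow> 'k \<Rightarrow> pt \<Rightarrow> real) \<Rightarrow>
    'k::finite fld \<Rightarrow> 'k fld \<Rightarrow> 'k fld \<Rightarrow> pt \<Rightarrow> real" where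
  "RE_integrand \<Omega> u lam \<zeta> \<kappa> Bv Bm Lm z \<phi> \<psi> x =
    (let T = temp u z x;
         A = (\<lambda>w. grad_vec \<Omega> (mom w) x + transpose (grad_vec \<Omega> (mom w) x)
                    - (2 / T) *\<^sub>R (ent w x *\<^sub>R Dmat \<Omega> z x));
         d = (\<lambda>w. divg \<Omega> (mom w) x - (1 / T) * divg \<Omega> (vel z) x * ent w x);
         r = (\<lambda>w \<alpha>. rho w \<alpha> x - chem u z \<alpha> x / T * ent w x)
     in \<zeta> x * T / 2 * trace (A \<phi> ** A \<psi>)
        + T * (lam x - 2 * \<zeta> x / 3) * d \<phi> * d \<psi>
        + (\<Sum>a\<in>UNIV. \<Sum>b\<in>UNIV. Bfrak \<kappa> (temp u z) Bv Bm a b x *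
              (Xf \<Omega> u z a \<phi> x \<bullet> Xf \<Omega> u z b \<psi> x))
        + T * (\<Sum>\<alpha>\<in>UNIV. \<Sum>\<beta>\<in>UNIV. r \<phi> \<alpha> * Lm \<alpha> \<beta> x * r \<psi> \<beta>))"

text \<open>The pairing < phi, R^(E)(z) psi >.\<close>
definition RE :: "pt set \<Rightarrow> (real^'k \<Rightarrow> real \<Rightarrow> real) \<Rightarrow>
    (pt \<Rightarrow> real) \<Rightarrow> (pt \<Rightarrow> real) \<Rightarrow> (pt \<Rightarrow> real) \<Rightarrow> ('k \<Rightarrow> pt \<Rightarrow> real) \<Rightarrow>
    ('k \<Rightarrow> 'k \<Rightarrow> pt \<Rightarrow> real) \<Rightarrow> ('k \<Rightarrow> 'k \<Rightarrow> pt \<Rightarrow> real) \<Rightarrow>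
    'k::finite fld \<Rightarrow> 'k fld \<Rightarrow> 'k fld \<Rightarrow> real" where
  "RE \<Omega> u lam \<zeta> \<kappa> Bv Bm Lm z \<phi> \<psi> =
     (LINT x:\<Omega>|lebesgue. RE_integrand \<Omega> u lam \<zeta> \<kappa> Bv Bm Lm z \<phi> \<psi> x)"

end

theory Submission
  imports Defs "HOL-Computational_Algebra.Polynomial"
begin

text \<open>Symmetry and nonnegativity hold pointwise. In the viscous part the matrix
  \<open>A = \<nabla>\<phi>\<^sub>M + \<nabla>\<phi>\<^sub>M\<^sup>T - (2/T) \<phi>\<^sub>s D\<close> is symmetric with trace \<open>2d\<close>, where \<open>d\<close> is the divergence
  factor, so \<open>tr(A\<^sup>2) \<ge> (tr A)\<^sup>2/3\<close> compensates the coefficient \<open>-2\<zeta>/3\<close>; the remaining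
  parts are positive semidefinite quadratic forms. Inserting \<open>\<delta>H/\<delta>z = (-|v|\<^sup>2/2 + \<mu>, v, T)\<close>
  kills every factor: the viscous factors cancel identically, \<open>\<phi>\<^sub>\<rho>\<^sub>\<alpha> - \<mu>\<^sub>\<alpha>\<phi>\<^sub>s/T = -|v|\<^sup>2/2\<close> does not
  depend on \<open>\<alpha>\<close>, so the zero row sums of \<open>B\<close> and \<open>L\<close> annihilate it, and \<open>X\<^sub>0 = \<nabla>(T/T)\<close> is the weak
  gradient of a constant. That this gradient vanishes almost everywhere is the only analytic
  input; it follows from the fundamental lemma of the calculus of variations, proved with
  smooth bumps \<open>\<Prod>\<^sub>j e(n(x\<^sub>j - a\<^sub>j)) e(n(b\<^sub>j - x\<^sub>j))\<close>, \<open>e(s) = exp(-1/s)\<close>, approximating indicators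
  of boxes.\<close>

section \<open>Iterated differentiability\<close>

lemma Ck_SucD: "Ck (Suc n) f \<Longrightarrow> Ck n f"
proof (induction n arbitrary: f)
  case 0
  then show ?case
    by (auto simp: continuous_on_eq_continuous_at differentiable_imp_continuous_within)
qed auto

lemma Ck_const: "Ck n (\<lambda>x. c)"
  by (induction n arbitrary: c) simp_all

lemma Ck_bounded_linear:
  fixes l :: "'a::euclidean_space \<Rightarrow> real"
  assumes "bounded_linear l"
  shows "Ck n l"
proof (cases n)
  case 0
  then show ?thesis using assms by (simp add: linear_continuous_on)
next
  case (Suc m)
  have "frechet_derivative l (at x) = l" for x
    using assms by (metis bounded_linear_imp_has_derivative frechet_derivative_at)
  then show ?thesis
    using Suc assms by (auto intro!: Ck_const simp: bounded_linear_imp_differentiable)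
qed

lemma frechet_derivative_add_apply:
  assumes "f differentiable (at x)" "g differentiable (at x)"
  shows "frechet_derivative (\<lambda>x. f x + g x) (at x) b =
         frechet_derivative f (at x) b + frechet_derivative g (at x) b"
proof -
  have "((\<lambda>x. f x + g x) has_derivative
      (\<lambda>h. frechet_derivative f (at x) h + frechet_derivative g (at x) h)) (at x)"
    using assms by (intro has_derivative_add) (auto simp: frechet_derivative_works)
  then show ?thesis by (metis frechet_derivative_at)
qed

lemma frechet_derivative_mult_apply:
  fixes f g :: "'a::real_normed_vector \<Rightarrow> real"
  assumes "f differentiable (at x)" "g differentiable (at x)"
  shows "frechet_derivative (\<lambda>x. f x * g x) (at x) b =
         f x * frechet_derivative g (at x) b + frechet_derivative f (at x) b * g x"
proof -
  have "((\<lambda>x. f x * g x) has_derivative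
      (\<lambda>h. f x * frechet_derivative g (at x) h + frechet_derivative f (at x) h * g x)) (at x)"
    using assms by (intro has_derivative_mult) (auto simp: frechet_derivative_works)
  then show ?thesis by (metis frechet_derivative_at)
qed

lemma Ck_add: "Ck n f \<Longrightarrow> Ck n g \<Longrightarrow> Ck n (\<lambda>x. f x + g x)"
proof (induction n arbitrary: f g)
  case 0
  then show ?case by (simp add: continuous_on_add)
next
  case (Suc n)
  have "Ck n (\<lambda>x. frechet_derivative (\<lambda>x. f x + g x) (at x) b)" if "b \<in> Basis" for b
    using Suc.IH[of "\<lambda>x. frechet_derivative f (at x) b" "\<lambda>x. frechet_derivative g (at x) b"]
      Suc.prems that by (simp add: frechet_derivative_add_apply)
  then show ?case
    using Suc.prems by (simp add: differentiable_add)
qed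

lemma Ck_mult: "Ck n f \<Longrightarrow> Ck n g \<Longrightarrow> Ck n (\<lambda>x. f x * g x)"
proof (induction n arbitrary: f g)
  case 0
  then show ?case by (simp add: continuous_on_mult)
next
  case (Suc n)
  have "Ck n (\<lambda>x. frechet_derivative (\<lambda>x. f x * g x) (at x) b)" if "b \<in> Basis" for b
  proof -
    have f: "Ck n f" and g: "Ck n g"
      using Ck_SucD[OF Suc.prems(1)] Ck_SucD[OF Suc.prems(2)] .
    have "Ck n (\<lambda>x. frechet_derivative f (at x) b)" "Ck n (\<lambda>x. frechet_derivative g (at x) b)"
      using Suc.prems that by simp_all
    then have "Ck n (\<lambda>x. f x * frechet_derivative g (at x) b + frechet_derivative f (at x) b * g x)"
      using f g by (intro Ck_add Suc.IH)
    then show ?thesis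
      using Suc.prems by (simp add: frechet_derivative_mult_apply)
  qed
  then show ?case
    using Suc.prems by (simp add: differentiable_mult)
qed

lemma Ck_prod: "finite S \<Longrightarrow> (\<And>j. j \<in> S \<Longrightarrow> Ck n (f j)) \<Longrightarrow> Ck n (\<lambda>x. \<Prod>j\<in>S. f j x)"
  by (induction S rule: finite_induct) (auto intro: Ck_mult Ck_const)

lemma frechet_derivative_real_apply:
  fixes f :: "real \<Rightarrow> real"
  assumes "f differentiable (at t)"
  shows "frechet_derivative f (at t) h = h * frechet_derivative f (at t) 1"
proof -
  have "linear (frechet_derivative f (at t))"
    using assms frechet_derivative_works has_derivative_linear by blast
  then show ?thesis by (metis linear_cmul mult.comm_neutral real_scaleR_def)
qed

lemma Ck_compose:
  fixes g :: "real \<Rightarrow> real"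
  assumes "\<And>k. Ck k g" "Ck n p"
  shows "Ck n (\<lambda>x. g (p x))"
  using assms
proof (induction n arbitrary: g p)
  case 0
  have "continuous_on UNIV g" "continuous_on UNIV p"
    using "0.prems"(1)[of 0] "0.prems"(2) by simp_all
  then show ?case using continuous_on_compose2[of UNIV g UNIV p] by simp
next
  case (Suc n)
  have dg: "g differentiable (at t)" for t
    using Suc.prems(1)[of 1] by simp
  have dp: "p differentiable (at x)" for x
    using Suc.prems(2) by simp
  define g' where "g' t = frechet_derivative g (at t) 1" for t
  have g': "Ck k g'" for k
  proof -
    have "Ck (Suc k) g" by (rule Suc.prems(1))
    then show ?thesis unfolding g'_def Ck.simps(2) Basis_real_def by blast
  qed
  have chain: "frechet_derivative (\<lambda>x. g (p x)) (at x) b = g' (p x) * frechet_derivative p (at x) b"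
    for x b
  proof -
    have "frechet_derivative (\<lambda>x. g (p x)) (at x) b
        = frechet_derivative g (at (p x)) (frechet_derivative p (at x) b)"
      using frechet_derivative_compose[of p x g, OF dp dg] by (simp add: o_def)
    also have "\<dots> = frechet_derivative p (at x) b * g' (p x)"
      unfolding g'_def by (rule frechet_derivative_real_apply[OF dg])
    finally show ?thesis by (simp only: mult.commute)
  qed
  have "Ck n (\<lambda>x. g' (p x) * frechet_derivative p (at x) b)" if "b \<in> Basis" for b
  proof (rule Ck_mult)
    show "Ck n (\<lambda>x. g' (p x))"
      using Suc.IH[OF g'] Ck_SucD[OF Suc.prems(2)] .
    show "Ck n (\<lambda>x. frechet_derivative p (at x) b)"
      using Suc.prems(2) that by simp
  qed
  then show ?case
    using differentiable_chain_at[OF dp dg] by (simp add: o_def chain)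
qed

section \<open>Flat functions and bumps on boxes\<close>

text \<open>Every derivative of \<open>exp (-1/s)\<close> has the form of \<open>flat_exp\<close>, which makes the family closed
  under differentiation.\<close>

definition flat_exp :: "real poly \<Rightarrow> real \<Rightarrow> real" where
  "flat_exp P s = (if s > 0 then poly P (inverse s) * exp (- inverse s) else 0)"

definition flat_exp_deriv_poly :: "real poly \<Rightarrow> real poly" where
  "flat_exp_deriv_poly P = [:0, 0, 1:] * (P - pderiv P)"

lemma poly_times_exp_neg_tendsto_0: "((\<lambda>t. poly P t * exp (- t)) \<longlongrightarrow> (0::real)) at_top"
proof -
  have "(\<lambda>t. poly P t * exp (- t)) = (\<lambda>t. \<Sum>i\<le>degree P. coeff P i * (t ^ i / exp t))"
    by (simp add: poly_altdef sum_divide_distrib exp_minus field_simps)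
  moreover have "((\<lambda>t. \<Sum>i\<le>degree P. coeff P i * (t ^ i / exp t)) \<longlongrightarrow> 0) at_top"
    by (intro tendsto_null_sum tendsto_mult_right_zero tendsto_power_div_exp_0)
  ultimately show ?thesis by simp
qed

lemma flat_exp_has_real_derivative_pos:
  assumes "s > 0"
  shows "(flat_exp P has_real_derivative flat_exp (flat_exp_deriv_poly P) s) (at s)"
proof -
  have "((\<lambda>s. poly P (inverse s) * exp (- inverse s)) has_real_derivative
     ((- (inverse s ^ 2)) * poly (pderiv P) (inverse s) * exp (- inverse s) +
       poly P (inverse s) * (exp (- inverse s) * (inverse s ^ 2)))) (at s)"
    using assms by (auto intro!: derivative_eq_intros simp: power2_eq_square)
  moreover have "(- (inverse s ^ 2)) * poly (pderiv P) (inverse s) * exp (- inverse s) +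
       poly P (inverse s) * (exp (- inverse s) * (inverse s ^ 2)) = flat_exp (flat_exp_deriv_poly P) s"
    using assms by (simp add: flat_exp_def flat_exp_deriv_poly_def algebra_simps power2_eq_square)
  ultimately have "((\<lambda>s. poly P (inverse s) * exp (- inverse s)) has_real_derivative
      flat_exp (flat_exp_deriv_poly P) s) (at s)"
    by simp
  then show ?thesis
    by (rule has_field_derivative_transform_within_open[where S="{0<..}"])
      (use assms in \<open>auto simp: flat_exp_def\<close>)
qed

lemma flat_exp_has_real_derivative_neg:
  assumes "s < 0"
  shows "(flat_exp P has_real_derivative flat_exp (flat_exp_deriv_poly P) s) (at s)"
proof -
  have "((\<lambda>s. 0) has_real_derivative flat_exp (flat_exp_deriv_poly P) s) (at s)"
    using assms by (simp add: flat_exp_def)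
  then show ?thesis
    by (rule has_field_derivative_transform_within_open[where S="{..<0}"])
      (use assms in \<open>auto simp: flat_exp_def\<close>)
qed

lemma flat_exp_has_real_derivative_0:
  "(flat_exp P has_real_derivative flat_exp (flat_exp_deriv_poly P) 0) (at 0)"
proof -
  have "((\<lambda>y. (flat_exp P y - flat_exp P 0) / (y - 0)) \<longlongrightarrow> 0) (at 0)"
  proof (rule filterlim_split_at_real)
    show "((\<lambda>y. (flat_exp P y - flat_exp P 0) / (y - 0)) \<longlongrightarrow> 0) (at_left 0)"
      by (rule tendsto_eventually, rule eventually_mono[OF eventually_at_left_real[of "-1"]])
        (auto simp: flat_exp_def)
    \<comment> \<open>at \<open>1/t\<close> the difference quotient is \<open>t * P(t) * exp(-t)\<close>\<close>
    have "((\<lambda>t. poly (pCons 0 P) t * exp (- t)) \<longlongrightarrow> 0) at_top"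
      by (rule poly_times_exp_neg_tendsto_0)
    then have "((\<lambda>t. (flat_exp P (inverse t) - flat_exp P 0) / (inverse t - 0)) \<longlongrightarrow> 0) at_top"
      by (rule Lim_transform_eventually, intro eventually_mono[OF eventually_gt_at_top[of 0]])
        (auto simp: flat_exp_def field_simps)
    then show "((\<lambda>y. (flat_exp P y - flat_exp P 0) / (y - 0)) \<longlongrightarrow> 0) (at_right 0)"
      by (simp add: filterlim_at_right_to_top)
  qed
  then show ?thesis
    by (simp add: has_field_derivative_iff flat_exp_def)
qed

lemma flat_exp_has_real_derivative:
  "(flat_exp P has_real_derivative flat_exp (flat_exp_deriv_poly P) s) (at s)"
  using flat_exp_has_real_derivative_pos flat_exp_has_real_derivative_neg
    flat_exp_has_real_derivative_0
  by (cases s "0::real" rule: linorder_cases) auto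

lemma Ck_flat_exp: "Ck k (flat_exp P)"
proof (induction k arbitrary: P)
  case 0
  have "isCont (flat_exp P) s" for s
    using flat_exp_has_real_derivative DERIV_isCont by blast
  then show ?case by (simp add: continuous_on_eq_continuous_at)
next
  case (Suc k)
  have deriv: "(flat_exp P has_derivative (*) (flat_exp (flat_exp_deriv_poly P) s)) (at s)" for s
    using flat_exp_has_real_derivative[of P s] unfolding has_field_derivative_def .
  then have "frechet_derivative (flat_exp P) (at s) 1 = flat_exp (flat_exp_deriv_poly P) s" for s
    by (metis frechet_derivative_at mult_1_right)
  then show ?case
    using Suc.IH deriv by (auto intro: differentiableI simp: Basis_real_def)
qed

definition smooth_step :: "real \<Rightarrow> real" where
  "smooth_step s = (if s > 0 then exp (- inverse s) else 0)"

lemma Ck_smooth_step: "Ck k smooth_step"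
proof -
  have "smooth_step = flat_exp 1"
    by (auto simp: smooth_step_def flat_exp_def)
  show ?thesis unfolding \<open>smooth_step = flat_exp 1\<close> by (rule Ck_flat_exp)
qed

lemma smooth_step_nonneg: "0 \<le> smooth_step s" and smooth_step_le_1: "smooth_step s \<le> 1"
  by (auto simp: smooth_step_def)

lemma smooth_step_eq_0_iff: "smooth_step s = 0 \<longleftrightarrow> s \<le> 0"
  by (auto simp: smooth_step_def)

lemma smooth_step_scaled_tendsto_1:
  assumes "d > 0"
  shows "(\<lambda>n. smooth_step (real (Suc n) * d)) \<longlonglongrightarrow> 1"
proof -
  have "(\<lambda>n. exp (- (inverse (real (Suc n)) * inverse d))) \<longlonglongrightarrow> exp (- (0 * inverse d))"
    by (intro tendsto_exp tendsto_minus tendsto_mult LIMSEQ_inverse_real_of_nat tendsto_const)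
  then show ?thesis
    using assms by (simp add: smooth_step_def)
qed

definition box_bump :: "real^'n \<Rightarrow> real^'n \<Rightarrow> nat \<Rightarrow> real^'n \<Rightarrow> real" where
  "box_bump a b n x =
    (\<Prod>j\<in>UNIV. smooth_step (real (Suc n) * (x$j - a$j)) * smooth_step (real (Suc n) * (b$j - x$j)))"

lemma Ck_box_bump:
  fixes a b :: "real^'n"
  shows "Ck k (box_bump a b n)"
proof -
  have affine: "Ck k (\<lambda>x::real^'n. c * x$j + d)" for c d j
    by (intro Ck_add Ck_const Ck_bounded_linear bounded_linear_const_mult bounded_linear_vec_nth)
  have "Ck k (\<lambda>x::real^'n. smooth_step (real (Suc n) * x$j + (- real (Suc n) * a$j)))"
    "Ck k (\<lambda>x::real^'n. smooth_step ((- real (Suc n)) * x$j + real (Suc n) * b$j))" for j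
    by (rule Ck_compose[OF Ck_smooth_step affine])+
  then show ?thesis
    unfolding box_bump_def by (intro Ck_prod Ck_mult finite) (simp_all add: algebra_simps)
qed

lemma box_bump_eq_0_outside: "x \<notin> box a b \<Longrightarrow> box_bump a b n x = 0"
  by (auto simp: box_bump_def mem_box_cart smooth_step_eq_0_iff not_less
      intro!: prod_zero[OF finite] mult_nonneg_nonpos)

lemma box_bump_support_subset: "closure {x. box_bump a b n x \<noteq> 0} \<subseteq> cbox a b"
proof (rule closure_minimal)
  show "{x. box_bump a b n x \<noteq> 0} \<subseteq> cbox a b"
    using box_bump_eq_0_outside box_subset_cbox by blast
qed (rule closed_cbox)

lemma compact_box_bump_support: "compact (closure {x. box_bump a b n x \<noteq> 0})"
  using box_bump_support_subset compact_cbox closed_closure compact_Int_closed inf.absorb2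
  by metis

lemma box_bump_nonneg: "0 \<le> box_bump a b n x" and box_bump_le_1: "box_bump a b n x \<le> 1"
  unfolding box_bump_def
  by (auto intro!: prod_nonneg prod_le_1 mult_le_one simp: smooth_step_nonneg smooth_step_le_1)

lemma box_bump_tendsto_indicator:
  fixes a b :: "real^'n"
  shows "(\<lambda>n. box_bump a b n x) \<longlonglongrightarrow> indicator (box a b) x"
proof (cases "x \<in> box a b")
  case True
  then have factor: "(\<lambda>n. smooth_step (real (Suc n) * (x$j - a$j)) * smooth_step (real (Suc n) * (b$j - x$j)))
      \<longlonglongrightarrow> 1 * 1" for j
    by (intro tendsto_mult smooth_step_scaled_tendsto_1) (auto simp: mem_box_cart)
  have "(\<lambda>n. box_bump a b n x) \<longlonglongrightarrow> (\<Prod>j\<in>(UNIV::'n set). 1 * 1)"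
    unfolding box_bump_def by (rule tendsto_prod) (rule factor)
  then show ?thesis using True by simp
qed (simp add: box_bump_eq_0_outside)

lemma test_fun_box_bump: "cbox a b \<subseteq> \<Omega> \<Longrightarrow> test_fun \<Omega> (box_bump a b n)"
  unfolding test_fun_def smooth_fun_def
  using Ck_box_bump compact_box_bump_support box_bump_support_subset by blast

section \<open>Integrals of derivatives of compactly supported functions\<close>

lemma eq_0_outside_closure_support: "x \<notin> closure {x. f x \<noteq> 0} \<Longrightarrow> f x = 0"
  by (meson closure_subset mem_Collect_eq subsetD)

lemma frechet_derivative_eq_0_outside_support:
  assumes "x \<notin> closure {x. f x \<noteq> 0}"
  shows "frechet_derivative f (at x) = (\<lambda>h. 0)"
proof -
  have "((\<lambda>x. 0) has_derivative (\<lambda>h. 0)) (at x)" by simp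
  then have "(f has_derivative (\<lambda>h. 0)) (at x)"
    by (rule has_derivative_transform_within_open[where s="- closure {x. f x \<noteq> 0}"])
      (use assms eq_0_outside_closure_support in auto)
  then show ?thesis by (metis frechet_derivative_at)
qed

lemma bounded_range_compact_support:
  fixes f :: "'a::euclidean_space \<Rightarrow> real"
  assumes "continuous_on UNIV f" "compact (closure {x. f x \<noteq> 0})"
  shows "bounded (range f)"
proof -
  have "f x \<in> insert 0 (f ` closure {x. f x \<noteq> 0})" for x
    using eq_0_outside_closure_support[of x f] by (cases "x \<in> closure {x. f x \<noteq> 0}") auto
  then have "range f \<subseteq> insert 0 (f ` closure {x. f x \<noteq> 0})"
    by blast
  moreover have "compact (f ` closure {x. f x \<noteq> 0})"
    using assms by (intro compact_continuous_image) (auto intro: continuous_on_subset)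
  ultimately show ?thesis
    using bounded_subset compact_imp_bounded bounded_insert by metis
qed

lemma integrable_compact_support:
  fixes f :: "'a::euclidean_space \<Rightarrow> real"
  assumes "continuous_on UNIV f" "compact (closure {x. f x \<noteq> 0})"
  shows "integrable lborel f"
proof -
  let ?S = "closure {x. f x \<noteq> 0}"
  have "integrable lborel (\<lambda>x. indicator ?S x *\<^sub>R f x)"
    using assms by (intro borel_integrable_compact) (auto intro: continuous_on_subset)
  moreover have "(\<lambda>x. indicator ?S x *\<^sub>R f x) = f"
  proof
    show "indicator ?S x *\<^sub>R f x = f x" for x
      using eq_0_outside_closure_support[of x f] by (cases "x \<in> ?S") auto
  qed
  ultimately show ?thesis by simp
qed

lemma lborel_integrable_translate_iff:
  fixes f :: "'a::euclidean_space \<Rightarrow> real"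
  assumes "f \<in> borel_measurable borel"
  shows "integrable lborel (\<lambda>x. f (x + c)) \<longleftrightarrow> integrable lborel f"
  using integrable_distr_eq[of "(+) c" lborel borel f] assms
  by (simp add: lborel_distr_plus add.commute)

lemma lborel_integral_translate:
  fixes f :: "'a::euclidean_space \<Rightarrow> real"
  assumes "f \<in> borel_measurable borel"
  shows "integral\<^sup>L lborel (\<lambda>x. f (x + c)) = integral\<^sup>L lborel f"
proof -
  have "integral\<^sup>L lborel f = integral\<^sup>L (distr lborel borel ((+) c)) f"
    by (simp add: lborel_distr_plus)
  also have "\<dots> = integral\<^sup>L lborel (\<lambda>x. f (c + x))"
    using assms by (intro integral_distr) auto
  finally show ?thesis by (simp add: add.commute)
qed

lemma has_real_derivative_along_line:
  assumes "f differentiable (at (x + t *\<^sub>R e))"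
  shows "((\<lambda>s. f (x + s *\<^sub>R e)) has_real_derivative frechet_derivative f (at (x + t *\<^sub>R e)) e) (at t)"
proof -
  let ?D = "frechet_derivative f (at (x + t *\<^sub>R e))"
  have "((\<lambda>s. x + s *\<^sub>R e) has_derivative (\<lambda>s. s *\<^sub>R e)) (at t)"
    by (auto intro!: derivative_eq_intros)
  then have "((\<lambda>s. f (x + s *\<^sub>R e)) has_derivative (\<lambda>s. ?D (s *\<^sub>R e))) (at t)"
    using diff_chain_at[of "\<lambda>s. x + s *\<^sub>R e" "\<lambda>s. s *\<^sub>R e" t f ?D] assms
    by (simp add: frechet_derivative_works o_def)
  moreover have "linear ?D"
    using assms frechet_derivative_works has_derivative_linear by blast
  ultimately have "((\<lambda>s. f (x + s *\<^sub>R e)) has_derivative (\<lambda>s. s * ?D e)) (at t)"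
    by (simp add: linear_cmul)
  then show ?thesis
    by (simp add: has_field_derivative_def mult.commute[of _ "?D e"])
qed

lemma difference_quotient_tendsto_frechet_derivative:
  assumes "f differentiable (at x)" "h \<longlonglongrightarrow> 0" "\<And>n. h n \<noteq> 0"
  shows "(\<lambda>n. (f (x + h n *\<^sub>R e) - f x) / h n) \<longlonglongrightarrow> frechet_derivative f (at x) e"
proof -
  have "((\<lambda>s. (f (x + s *\<^sub>R e) - f (x + 0 *\<^sub>R e)) / (s - 0)) \<longlongrightarrow>
      frechet_derivative f (at (x + 0 *\<^sub>R e)) e) (at 0)"
    using has_real_derivative_along_line[of f x 0 e] assms(1)
    by (simp only: has_field_derivative_iff) simp
  moreover have "filterlim h (at 0) sequentially"
    using assms(2,3) by (simp add: filterlim_at)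
  ultimately show ?thesis
    using filterlim_compose by fastforce
qed

lemma difference_quotient_bounded:
  assumes "\<And>y. f differentiable (at y)" "\<And>y. \<bar>frechet_derivative f (at y) e\<bar> \<le> M" "t > 0"
  shows "\<bar>(f (x + t *\<^sub>R e) - f x) / t\<bar> \<le> M"
proof -
  obtain s where "(f (x + t *\<^sub>R e) - f (x + 0 *\<^sub>R e)) = (t - 0) * frechet_derivative f (at (x + s *\<^sub>R e)) e"
    using MVT2[of 0 t "\<lambda>s. f (x + s *\<^sub>R e)" "\<lambda>s. frechet_derivative f (at (x + s *\<^sub>R e)) e"]
      assms(1,3) has_real_derivative_along_line by blast
  then show ?thesis
    using assms(2,3) by simp
qed

text \<open>Difference quotients have integral zero by translation invariance and converge
  boundedly to the derivative.\<close>

lemma integral_frechet_derivative_compact_support_eq_0: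
  fixes \<phi> :: "'a::euclidean_space \<Rightarrow> real"
  assumes C1: "Ck 1 \<phi>" and supp: "compact (closure {x. \<phi> x \<noteq> 0})" and e: "e \<in> Basis"
  defines "d \<equiv> \<lambda>x. frechet_derivative \<phi> (at x) e"
  shows "integrable lborel d" "integral\<^sup>L lborel d = 0"
proof -
  let ?S = "closure {x. \<phi> x \<noteq> 0}"
  define h where "h n = inverse (real (Suc n))" for n
  define q where "q n x = (\<phi> (x + h n *\<^sub>R e) - \<phi> x) / h n" for n x
  have diff: "\<phi> differentiable (at x)" for x
    using C1 by simp
  have cont_phi: "continuous_on UNIV \<phi>"
    using Ck_SucD[of 0 \<phi>] C1 by simp
  have cont_d: "continuous_on UNIV d"
    using C1 e by (simp add: d_def)
  have supp_d: "compact (closure {x. d x \<noteq> 0})"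
  proof -
    have "{x. d x \<noteq> 0} \<subseteq> ?S"
      using frechet_derivative_eq_0_outside_support[of _ \<phi>] unfolding d_def by fastforce
    then have "closure {x. d x \<noteq> 0} \<subseteq> ?S"
      by (simp add: closure_minimal)
    then show ?thesis
      using supp closed_closure compact_Int_closed inf.absorb2 by metis
  qed
  obtain M where M: "\<And>x. \<bar>d x\<bar> \<le> M"
    using bounded_range_compact_support[OF cont_d supp_d] by (auto simp: bounded_iff)
  obtain R where R: "\<And>x. x \<in> ?S \<Longrightarrow> norm x \<le> R"
    using supp compact_imp_bounded bounded_iff by metis
  have h: "h \<longlonglongrightarrow> 0" "h n > 0" "h n \<le> 1" for n
    unfolding h_def using LIMSEQ_inverse_real_of_nat by (auto simp: field_simps)
  have q_bound: "\<bar>q n x\<bar> \<le> M * indicator (cball 0 (R + 1)) x" for n x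
  proof (cases "x \<in> cball 0 (R + 1)")
    case True
    then show ?thesis
      using difference_quotient_bounded[OF diff M[unfolded d_def] h(2)] by (simp add: q_def)
  next
    case False
    then have "norm x > R + 1"
      by simp
    moreover have "norm x - h n \<le> norm (x + h n *\<^sub>R e)"
      using norm_triangle_ineq2[of x "- (h n *\<^sub>R e)"] h(2)[of n] e by simp
    ultimately have "\<not> norm x \<le> R" "\<not> norm (x + h n *\<^sub>R e) \<le> R"
      using h(3)[of n] by linarith+
    then have "\<phi> x = 0" "\<phi> (x + h n *\<^sub>R e) = 0"
      using R eq_0_outside_closure_support by blast+
    then show ?thesis
      using False by (simp add: q_def)
  qed
  have q_tendsto: "(\<lambda>n. q n x) \<longlonglongrightarrow> d x" for x
    unfolding q_def d_def
    using difference_quotient_tendsto_frechet_derivative[OF diff h(1)] h(2) less_irrefl by metis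
  have meas_phi: "\<phi> \<in> borel_measurable borel"
    using cont_phi by (rule borel_measurable_continuous_onI)
  have int_phi: "integrable lborel \<phi>"
    using cont_phi supp by (rule integrable_compact_support)
  have integral_q: "integral\<^sup>L lborel (q n) = 0" for n
  proof -
    have "integral\<^sup>L lborel (q n) = (integral\<^sup>L lborel (\<lambda>x. \<phi> (x + h n *\<^sub>R e)) - integral\<^sup>L lborel \<phi>) / h n"
      unfolding q_def[abs_def] using int_phi lborel_integrable_translate_iff[OF meas_phi] by simp
    then show ?thesis
      using lborel_integral_translate[OF meas_phi] by simp
  qed
  have meas_q: "q n \<in> borel_measurable lborel" for n
    unfolding q_def using meas_phi by measurable
  have meas_d: "d \<in> borel_measurable lborel"
    using cont_d by (simp add: borel_measurable_continuous_onI)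
  have int_bound: "integrable lborel (\<lambda>x::'a. M * indicator (cball 0 (R + 1)) x :: real)"
    using emeasure_bounded_finite[OF bounded_cball, of "0::'a" "R + 1"]
    by (intro integrable_mult_right integrable_real_indicator) auto
  have AE_tendsto: "AE x in lborel. (\<lambda>n. q n x) \<longlonglongrightarrow> d x"
    using q_tendsto by simp
  have AE_bound: "AE x in lborel. norm (q n x) \<le> M * indicator (cball 0 (R + 1)) x" for n
    using q_bound by simp
  note dominated = meas_d meas_q int_bound AE_tendsto AE_bound
  show "integrable lborel d"
    by (rule integrable_dominated_convergence[OF dominated])
  have "(\<lambda>n. integral\<^sup>L lborel (q n)) \<longlonglongrightarrow> integral\<^sup>L lborel d"
    by (rule integral_dominated_convergence[OF dominated])
  then show "integral\<^sup>L lborel d = 0"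
    by (simp add: integral_q LIMSEQ_const_iff)
qed

lemma integral_partial_test_fun_eq_0:
  assumes "test_fun \<Omega> \<phi>"
  shows "integral\<^sup>L lebesgue (\<lambda>x. partial \<phi> i x) = 0"
proof -
  have C1: "Ck 1 \<phi>" and supp: "compact (closure {x. \<phi> x \<noteq> 0})"
    using assms by (auto simp: test_fun_def smooth_fun_def)
  have "continuous_on UNIV (\<lambda>x. partial \<phi> i x)"
    using C1 by (simp add: partial_def axis_in_Basis_iff)
  then have "(\<lambda>x. partial \<phi> i x) \<in> borel_measurable borel"
    by (rule borel_measurable_continuous_onI)
  then have "integral\<^sup>L lebesgue (\<lambda>x. partial \<phi> i x) = integral\<^sup>L lborel (\<lambda>x. partial \<phi> i x)"
    by (intro integral_completion) simp
  also have "\<dots> = 0"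
    using integral_frechet_derivative_compact_support_eq_0(2)[OF C1 supp, of "axis i 1"]
    by (simp add: partial_def axis_in_Basis_iff)
  finally show ?thesis .
qed

section \<open>The fundamental lemma of the calculus of variations\<close>

lemma lebesgue_integral_eq_0_if_box_integrals_eq_0:
  fixes G :: "'a::euclidean_space \<Rightarrow> real"
  assumes "integrable lebesgue G" "\<And>a b. (LINT x:box a b|lebesgue. G x) = 0"
  shows "integral\<^sup>L lebesgue G = 0"
proof -
  let ?B = "\<lambda>i::nat. box (- (real i *\<^sub>R One)) (real i *\<^sub>R One) :: 'a set"
  have "incseq ?B"
    by (auto simp: incseq_def subset_box inner_add_left)
  moreover have "set_integrable lebesgue (\<Union>i. ?B i) G"
    using assms(1) by (simp add: UN_box_eq_UNIV set_integrable_def)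
  ultimately have "(\<lambda>i. LINT x:?B i|lebesgue. G x) \<longlonglongrightarrow> (LINT x:(\<Union>i. ?B i)|lebesgue. G x)"
    by (intro set_integral_cont_up) auto
  then show ?thesis
    using assms(2) by (simp add: UN_box_eq_UNIV set_lebesgue_integral_def LIMSEQ_const_iff)
qed

text \<open>The box integrals of \<open>G\<close> determine its integrals over all Borel sets; we pass to a Borel
  representative of \<open>G\<close> to run the \<open>\<sigma>\<close>-algebra induction on \<open>lborel\<close>.\<close>

lemma AE_eq_0_if_box_integrals_eq_0:
  fixes G :: "'a::euclidean_space \<Rightarrow> real"
  assumes int: "integrable lebesgue G" and box: "\<And>a b. (LINT x:box a b|lebesgue. G x) = 0"
  shows "AE x in lebesgue. G x = 0"
proof -
  obtain G' where G'_borel: "G' \<in> borel_measurable lborel" and "AE x in lborel. G x = G' x"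
    using completion_ex_borel_measurable_real[OF borel_measurable_integrable[OF int]] by blast
  then have G'_AE: "AE x in lebesgue. G x = G' x"
    using AE_completion by blast
  have G'_lebesgue: "G' \<in> borel_measurable lebesgue"
    using G'_borel by (rule measurable_completion)
  have int': "integrable lborel G'"
    using integrable_cong_AE_imp[OF int G'_lebesgue G'_AE] integrable_completion[OF G'_borel] by simp
  have set_integral_G': "(LINT x:A|lborel. G' x) = (LINT x:A|lebesgue. G x)" if "A \<in> sets borel" for A
  proof -
    have "(LINT x:A|lborel. G' x) = integral\<^sup>L lebesgue (\<lambda>x. indicator A x *\<^sub>R G' x)"
      unfolding set_lebesgue_integral_def
      by (rule integral_completion[symmetric]) (use that G'_borel in measurable)
    also have "\<dots> = (LINT x:A|lebesgue. G x)"
    proof -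
      have "A \<in> sets lebesgue"
        using that by (intro sets_completionI_sets) simp
      then show ?thesis
        unfolding set_lebesgue_integral_def
        using G'_lebesgue borel_measurable_integrable[OF int] G'_AE
        by (intro integral_cong_AE) (auto intro!: borel_measurable_times borel_measurable_indicator)
    qed
    finally show ?thesis .
  qed
  have "(LINT x:A|lborel. G' x) = 0" if "A \<in> sets lborel" for A
  proof -
    have "Int_stable (range (\<lambda>(a, b). box a b :: 'a set))"
      by (auto simp: Int_stable_def box_Int_box)
    moreover have "range (\<lambda>(a, b). box a b :: 'a set) \<subseteq> Pow UNIV"
      by simp
    moreover have "A \<in> sigma_sets UNIV (range (\<lambda>(a, b). box a b))"
      using that by (subst (asm) sets_lborel, subst (asm) borel_eq_box) (simp add: sets_measure_of)
    ultimately show ?thesis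
    proof (induction rule: sigma_sets_induct_disjoint)
      case (basic A)
      then show ?case using box set_integral_G' by auto
    next
      case empty
      then show ?case by (simp add: set_lebesgue_integral_def)
    next
      case (compl A)
      have "A \<in> sets borel"
        using compl.hyps by (simp add: borel_eq_box sets_measure_of)
      then have "integrable lborel (\<lambda>x. indicator A x *\<^sub>R G' x)"
        using int' by (intro integrable_mult_indicator) auto
      moreover have "(\<lambda>x. indicator (UNIV - A) x *\<^sub>R G' x) = (\<lambda>x. G' x - indicator A x *\<^sub>R G' x)"
        by (auto simp: indicator_def)
      ultimately have "(LINT x:(UNIV - A)|lborel. G' x) = integral\<^sup>L lborel G' - (LINT x:A|lborel. G' x)"
        using int' by (simp add: set_lebesgue_integral_def)
      also have "integral\<^sup>L lborel G' = 0"
        using set_integral_G'[of UNIV] lebesgue_integral_eq_0_if_box_integrals_eq_0[OF int box]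
        by (simp add: set_lebesgue_integral_def)
      finally show ?case
        using compl.IH by simp
    next
      case (union A)
      have A: "A i \<in> sets lborel" for i
        using union.hyps(2) by (auto simp: borel_eq_box sets_measure_of)
      have "set_integrable lborel (\<Union>i. A i) G'"
        unfolding set_integrable_def using A int' by (intro integrable_mult_indicator) auto
      then have "(LINT x:(\<Union>i. A i)|lborel. G' x) = (\<Sum>i. (LINT x:(A i)|lborel. G' x))"
        using A union.hyps(1)
        by (intro lebesgue_integral_countable_add) (auto simp: disjoint_family_on_def)
      then show ?case
        using union.IH by simp
    qed
  qed
  then have "AE x in lborel. G' x = 0"
    by (rule sigma_finite_measure.density_zero[OF sigma_finite_lborel int'])
  then have "AE x in lebesgue. G' x = 0"
    by (rule AE_completion)
  with G'_AE show ?thesis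
    by eventually_elim simp
qed

lemma set_integral_eq_box_integral:
  fixes g :: "'a::euclidean_space \<Rightarrow> real"
  assumes "set_integrable lebesgue (cbox p q) g" "box p q \<subseteq> S" "S \<subseteq> cbox p q"
    "S \<in> sets lebesgue"
  shows "(LINT x:S|lebesgue. g x) = (LINT x:box p q|lebesgue. g x)"
proof -
  have "AE x in lebesgue. x \<notin> cbox p q - box p q"
    using negligible_frontier_interval negligible_iff_null_sets AE_not_in by blast
  then have "AE x in lebesgue. x \<in> S \<longleftrightarrow> x \<in> box p q"
    by eventually_elim (use assms(2,3) in blast)
  moreover have "set_integrable lebesgue S g"
    by (rule set_integrable_subset[OF assms(1) assms(4) assms(3)])
  moreover have "set_integrable lebesgue (box p q) g"
    by (rule set_integrable_subset[OF assms(1)]) (auto simp: box_subset_cbox)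
  ultimately show ?thesis
    by (intro set_integral_cong_set) (auto simp: set_borel_measurable_def set_integrable_def)
qed

lemma AE_eq_0_on_cbox_if_box_integrals_eq_0:
  fixes g :: "real^'n \<Rightarrow> real"
  assumes loc: "\<And>K. compact K \<Longrightarrow> K \<subseteq> \<Omega> \<Longrightarrow> set_integrable lebesgue K g"
    and box: "\<And>a b. cbox a b \<subseteq> \<Omega> \<Longrightarrow> (LINT x:box a b|lebesgue. g x) = 0"
    and cd: "cbox c d \<subseteq> \<Omega>"
  shows "AE x in lebesgue. x \<in> cbox c d \<longrightarrow> g x = 0"
proof -
  define G where "G x = indicator (cbox c d) x * g x" for x
  have "integrable lebesgue G"
    using loc[OF compact_cbox cd] by (simp add: set_integrable_def G_def[abs_def])
  moreover have "(LINT x:box a b|lebesgue. G x) = 0" for a b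
  proof -
    define a' :: "real^'n" where "a' = (\<chi> i. max (a$i) (c$i))"
    define b' :: "real^'n" where "b' = (\<chi> i. min (b$i) (d$i))"
    have sub: "cbox a' b' \<subseteq> cbox c d"
      by (auto simp: mem_box_cart a'_def b'_def)
    have "(LINT x:box a b|lebesgue. G x) = (LINT x:(box a b \<inter> cbox c d)|lebesgue. g x)"
      by (simp add: set_lebesgue_integral_def G_def indicator_inter_arith mult.assoc)
    also have "\<dots> = (LINT x:box a' b'|lebesgue. g x)"
      using loc[OF compact_cbox] sub cd
      by (intro set_integral_eq_box_integral)
        (auto simp: a'_def b'_def mem_box_cart less_imp_le)
    also have "\<dots> = 0"
      using box sub cd by blast
    finally show ?thesis .
  qed
  ultimately have "AE x in lebesgue. G x = 0"
    by (rule AE_eq_0_if_box_integrals_eq_0)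
  then show ?thesis
    by eventually_elim (auto simp: G_def indicator_def)
qed

lemma AE_eq_0_on_open_if_box_integrals_eq_0:
  fixes g :: "real^'n \<Rightarrow> real"
  assumes "open \<Omega>"
    and loc: "\<And>K. compact K \<Longrightarrow> K \<subseteq> \<Omega> \<Longrightarrow> set_integrable lebesgue K g"
    and box: "\<And>a b. cbox a b \<subseteq> \<Omega> \<Longrightarrow> (LINT x:box a b|lebesgue. g x) = 0"
  shows "AE x in lebesgue. x \<in> \<Omega> \<longrightarrow> g x = 0"
proof -
  define N where "N = {x \<in> \<Omega>. g x \<noteq> 0}"
  have "negligible N"
    unfolding locally_negligible_alt[of N]
  proof
    fix x assume "x \<in> N"
    then obtain e where e: "e > 0" "ball x e \<subseteq> \<Omega>"
      using assms(1) openE by (auto simp: N_def)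
    obtain a b where ab: "x \<in> box a b" "box a b \<subseteq> ball x (e/2)"
      using rational_boxes[of "e/2" x] e by auto
    then have "cbox a b = closure (box a b)"
      by (metis closure_box empty_iff)
    also have "\<dots> \<subseteq> cball x (e/2)"
      using ab closure_minimal[OF _ closed_cball] ball_subset_cball by blast
    also have "\<dots> \<subseteq> \<Omega>"
      using e by (auto simp: subset_eq)
    finally have "AE y in lebesgue. y \<in> cbox a b \<longrightarrow> g y = 0"
      using AE_eq_0_on_cbox_if_box_integrals_eq_0[OF loc box] by blast
    then obtain Z where Z: "Z \<in> null_sets lebesgue" "{y. \<not> (y \<in> cbox a b \<longrightarrow> g y = 0)} \<subseteq> Z"
      unfolding eventually_ae_filter by auto
    then have "N \<inter> box a b \<subseteq> Z"
      using box_subset_cbox[of a b] by (auto simp: N_def)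
    then have "negligible (N \<inter> box a b)"
      using Z(1) negligible_iff_null_sets negligible_subset by blast
    then show "\<exists>U. openin (top_of_set N) U \<and> x \<in> U \<and> negligible U"
      using \<open>x \<in> N\<close> ab by (intro exI[of _ "N \<inter> box a b"]) (auto intro: openin_open_Int)
  qed
  then have "AE x in lebesgue. x \<notin> N"
    using negligible_iff_null_sets AE_not_in by blast
  then show ?thesis
    by eventually_elim (auto simp: N_def)
qed

text \<open>Box bumps converge boundedly to the indicator of a box, so all box integrals of \<open>g\<close>
  vanish.\<close>

lemma AE_eq_0_if_orthogonal_to_test_funs:
  fixes g :: "pt \<Rightarrow> real"
  assumes "open \<Omega>"
    and loc: "\<And>K. compact K \<Longrightarrow> K \<subseteq> \<Omega> \<Longrightarrow> set_integrable lebesgue K g"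
    and orth: "\<And>\<phi>. test_fun \<Omega> \<phi> \<Longrightarrow> (LINT x:\<Omega>|lebesgue. g x * \<phi> x) = 0"
  shows "AE x in lebesgue. x \<in> \<Omega> \<longrightarrow> g x = 0"
proof (rule AE_eq_0_on_open_if_box_integrals_eq_0[OF assms(1) loc])
  fix a b :: pt
  assume ab: "cbox a b \<subseteq> \<Omega>"
  define h where "h x = indicator (cbox a b) x * g x" for x
  have int_h: "integrable lebesgue h"
    using loc[OF compact_cbox ab] by (simp add: set_integrable_def h_def[abs_def])
  have meas_bump: "box_bump a b n \<in> borel_measurable lebesgue" for n
  proof -
    have "continuous_on UNIV (box_bump a b n)"
      using Ck_box_bump[of 0 a b n] by simp
    then have "box_bump a b n \<in> borel_measurable lborel"
      using borel_measurable_continuous_onI by simp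
    then show ?thesis
      by (rule measurable_completion)
  qed
  have "integral\<^sup>L lebesgue (\<lambda>x. h x * box_bump a b n x) = (LINT x:\<Omega>|lebesgue. g x * box_bump a b n x)"
    for n
  proof -
    have "(\<lambda>x. h x * box_bump a b n x) = (\<lambda>x. indicator \<Omega> x *\<^sub>R (g x * box_bump a b n x))"
    proof
      show "h x * box_bump a b n x = indicator \<Omega> x *\<^sub>R (g x * box_bump a b n x)" for x
        using ab box_subset_cbox[of a b] box_bump_eq_0_outside[of x a b n]
        by (cases "x \<in> box a b") (auto simp: h_def indicator_def)
    qed
    then show ?thesis
      by (simp add: set_lebesgue_integral_def)
  qed
  then have integral_0: "integral\<^sup>L lebesgue (\<lambda>x. h x * box_bump a b n x) = 0" for n
    using orth[OF test_fun_box_bump[OF ab]] by simp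
  have "(\<lambda>n. integral\<^sup>L lebesgue (\<lambda>x. h x * box_bump a b n x))
      \<longlonglongrightarrow> integral\<^sup>L lebesgue (\<lambda>x. h x * indicator (box a b) x)"
  proof (rule integral_dominated_convergence[where w="\<lambda>x. norm (h x)"])
    have meas_h: "h \<in> borel_measurable lebesgue"
      using int_h by (rule borel_measurable_integrable)
    then show "(\<lambda>x. h x * indicator (box a b) x) \<in> borel_measurable lebesgue"
      by (intro borel_measurable_times borel_measurable_indicator) auto
    show "(\<lambda>x. h x * box_bump a b n x) \<in> borel_measurable lebesgue" for n
      by (rule borel_measurable_times[OF meas_h meas_bump])
    show "integrable lebesgue (\<lambda>x. norm (h x))"
      using int_h by (rule integrable_norm)
    show "AE x in lebesgue. (\<lambda>n. h x * box_bump a b n x) \<longlonglongrightarrow> h x * indicator (box a b) x"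
      by (intro AE_I2 tendsto_mult tendsto_const box_bump_tendsto_indicator)
    show "AE x in lebesgue. norm (h x * box_bump a b n x) \<le> norm (h x)" for n
      using box_bump_nonneg[of a b n] box_bump_le_1[of a b n]
      by (intro AE_I2) (simp add: abs_mult mult_left_le)
  qed
  then have "integral\<^sup>L lebesgue (\<lambda>x. h x * indicator (box a b) x) = 0"
    by (simp add: integral_0 LIMSEQ_const_iff)
  moreover have "h x * indicator (box a b) x = indicator (box a b) x *\<^sub>R g x" for x
    using box_subset_cbox[of a b] by (auto simp: h_def indicator_def)
  ultimately show "(LINT x:box a b|lebesgue. g x) = 0"
    by (simp add: set_lebesgue_integral_def)
qed

lemma weak_grad_AE_eq_0_if_const:
  assumes "open \<Omega>" and grad: "is_weak_grad \<Omega> f G" and const: "\<And>x. x \<in> \<Omega> \<Longrightarrow> f x = c"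
  shows "AE x in lebesgue. x \<in> \<Omega> \<longrightarrow> G x = 0"
proof -
  have component: "AE x in lebesgue. x \<in> \<Omega> \<longrightarrow> G x $ i = 0" for i
  proof (rule AE_eq_0_if_orthogonal_to_test_funs[OF assms(1)])
    show "set_integrable lebesgue K (\<lambda>x. G x $ i)" if "compact K" "K \<subseteq> \<Omega>" for K
      using grad that by (simp add: is_weak_grad_def)
    fix \<phi> assume \<phi>: "test_fun \<Omega> \<phi>"
    have "indicator \<Omega> x *\<^sub>R (f x * partial \<phi> i x) = c * partial \<phi> i x" for x
    proof (cases "x \<in> \<Omega>")
      case False
      then have "x \<notin> closure {x. \<phi> x \<noteq> 0}"
        using \<phi> by (auto simp: test_fun_def)
      then show ?thesis
        using False by (simp add: partial_def frechet_derivative_eq_0_outside_support)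
    qed (simp add: const)
    then have "(\<lambda>x. indicator \<Omega> x *\<^sub>R (f x * partial \<phi> i x)) = (\<lambda>x. c * partial \<phi> i x)"
      by (rule ext)
    then have "(LINT x:\<Omega>|lebesgue. f x * partial \<phi> i x) = c * integral\<^sup>L lebesgue (\<lambda>x. partial \<phi> i x)"
      by (simp add: set_lebesgue_integral_def)
    also have "\<dots> = 0"
      by (simp add: integral_partial_test_fun_eq_0[OF \<phi>])
    finally show "(LINT x:\<Omega>|lebesgue. G x $ i * \<phi> x) = 0"
      using grad \<phi> by (simp add: is_weak_grad_def)
  qed
  have "AE x in lebesgue. \<forall>i\<in>UNIV. x \<in> \<Omega> \<longrightarrow> G x $ i = 0"
    by (rule AE_finite_allI) (use component in auto)
  then show ?thesis
    by eventually_elim (auto simp: vec_eq_iff)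
qed

section \<open>The integrand of the dissipative operator\<close>

lemma trace_square_ge:
  fixes A :: "real^'n^'n"
  assumes "transpose A = A"
  shows "(trace A)\<^sup>2 \<le> CARD('n) * trace (A ** A)"
proof -
  have "(trace A)\<^sup>2 \<le> (\<Sum>i\<in>UNIV. (A$i$i)\<^sup>2) * CARD('n)"
    unfolding trace_def by (rule sum_squared_le_sum_of_squares)
  also have "(\<Sum>i\<in>UNIV. (A$i$i)\<^sup>2) \<le> (\<Sum>i\<in>UNIV. \<Sum>k\<in>UNIV. (A$i$k)\<^sup>2)"
    by (intro sum_mono member_le_sum) auto
  also have "\<dots> = trace (A ** A)"
    using assms
    by (simp add: trace_def matrix_matrix_mult_def power2_eq_square vec_eq_iff transpose_def)
  finally show ?thesis
    by (simp add: mult.commute)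
qed

lemma viscous_form_nonneg:
  fixes G H :: "real^3^3" and T \<zeta> lam e :: real
  assumes T: "T > 0" and \<zeta>: "\<zeta> \<ge> 0" and lam: "lam \<ge> 0"
  defines "A \<equiv> G + transpose G - (2 / T) *\<^sub>R (e *\<^sub>R ((1/2) *\<^sub>R (H + transpose H)))"
    and "d \<equiv> trace G - (1 / T) * trace H * e"
  shows "\<zeta> * T / 2 * trace (A ** A) + T * (lam - 2 * \<zeta> / 3) * d * d \<ge> 0"
proof -
  have "transpose A = A"
    by (simp add: A_def vec_eq_iff transpose_def algebra_simps)
  moreover have "trace A = 2 * d"
    using T by (simp add: A_def d_def trace_def transpose_def sum_3 field_simps)
  ultimately have "4 * d\<^sup>2 / 3 \<le> trace (A ** A)"
    using trace_square_ge[of A] by (simp add: power_mult_distrib)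
  then have "\<zeta> * T / 2 * (4 * d\<^sup>2 / 3) \<le> \<zeta> * T / 2 * trace (A ** A)"
    using T \<zeta> by (intro mult_left_mono) auto
  moreover have "0 \<le> T * lam * d\<^sup>2"
    using T lam by simp
  ultimately show ?thesis
    by (simp add: power2_eq_square algebra_simps)
qed

lemma quadratic_form_swap:
  assumes "\<And>a b. c a b = c b a"
  shows "(\<Sum>a\<in>S. \<Sum>b\<in>S. c a b * h a b) = (\<Sum>a\<in>S. \<Sum>b\<in>S. c a b * h b a)"
proof -
  have "(\<Sum>a\<in>S. \<Sum>b\<in>S. c a b * h b a) = (\<Sum>a\<in>S. \<Sum>b\<in>S. c b a * h b a)"
    by (simp only: assms)
  also have "\<dots> = (\<Sum>b\<in>S. \<Sum>a\<in>S. c b a * h b a)"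
    by (rule sum.swap)
  finally show ?thesis by simp
qed

lemma psd_quadratic_form_inner_nonneg:
  fixes X :: "'o \<Rightarrow> real^'m" and B :: "'o \<Rightarrow> 'o \<Rightarrow> real"
  assumes "\<And>\<xi>. (\<Sum>a\<in>S. \<Sum>b\<in>S. \<xi> a * B a b * \<xi> b) \<ge> 0"
  shows "(\<Sum>a\<in>S. \<Sum>b\<in>S. B a b * (X a \<bullet> X b)) \<ge> 0"
proof -
  have "(\<Sum>a\<in>S. \<Sum>b\<in>S. B a b * (X a \<bullet> X b)) = (\<Sum>a\<in>S. \<Sum>b\<in>S. \<Sum>k\<in>UNIV. X a $ k * B a b * X b $ k)"
    by (simp add: inner_vec_def sum_distrib_left mult_ac)
  also have "\<dots> = (\<Sum>a\<in>S. \<Sum>k\<in>UNIV. \<Sum>b\<in>S. X a $ k * B a b * X b $ k)"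
    by (rule sum.cong[OF refl]) (rule sum.swap)
  also have "\<dots> = (\<Sum>k\<in>UNIV. \<Sum>a\<in>S. \<Sum>b\<in>S. X a $ k * B a b * X b $ k)"
    by (rule sum.swap)
  also have "\<dots> \<ge> 0"
    by (intro sum_nonneg assms)
  finally show ?thesis .
qed

lemma sum_UNIV_option: "(\<Sum>a\<in>UNIV. f a) = f None + (\<Sum>\<beta>\<in>UNIV. f (Some \<beta>))"
  for f :: "'k::finite option \<Rightarrow> 'b::comm_monoid_add"
  by (simp add: UNIV_option_conv sum.reindex)

lemma set_lebesgue_integral_nonneg:
  fixes f :: "'a \<Rightarrow> real"
  shows "(\<And>x. x \<in> A \<Longrightarrow> 0 \<le> f x) \<Longrightarrow> 0 \<le> (LINT x:A|M. f x)"
  unfolding set_lebesgue_integral_def by (intro integral_nonneg_AE AE_I2) (simp add: indicator_def)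

lemma set_lebesgue_integral_eq_0_AE:
  fixes f :: "'a \<Rightarrow> real"
  shows "AE x in M. x \<in> A \<longrightarrow> f x = 0 \<Longrightarrow> (LINT x:A|M. f x) = 0"
  unfolding set_lebesgue_integral_def
  by (intro integral_eq_zero_AE) (auto elim: eventually_mono simp: indicator_def)

lemma wgrad_cong:
  assumes "\<And>y. y \<in> \<Omega> \<Longrightarrow> f y = g y"
  shows "wgrad \<Omega> f = wgrad \<Omega> g"
proof -
  have "set_integrable lebesgue K f = set_integrable lebesgue K g" if "K \<subseteq> \<Omega>" for K
    by (rule set_integrable_cong) (use that assms in auto)
  moreover have "(LINT x:\<Omega>|lebesgue. f x * p x) = (LINT x:\<Omega>|lebesgue. g x * p x)" for p :: "pt \<Rightarrow> real"
    unfolding set_lebesgue_integral_def by (rule arg_cong[where f="integral\<^sup>L lebesgue"]) (auto simp: assms indicator_def)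
  ultimately have "is_weak_grad \<Omega> f = is_weak_grad \<Omega> g"
    unfolding is_weak_grad_def by (intro ext) (simp cong: conj_cong imp_cong)
  then show ?thesis
    by (simp add: wgrad_def)
qed

lemma is_weak_grad_wgrad:
  assumes "\<exists>g. is_weak_grad \<Omega> f g"
  shows "is_weak_grad \<Omega> f (wgrad \<Omega> f)"
  using assms unfolding wgrad_def by (rule someI_ex)

lemma Bfrak_commute:
  "(\<And>\<alpha> \<beta>. Bm \<alpha> \<beta> x = Bm \<beta> \<alpha> x) \<Longrightarrow> Bfrak \<kappa> T Bv Bm a b x = Bfrak \<kappa> T Bv Bm b a x"
  by (cases a; cases b) (auto simp: Bfrak_def)

lemma RE_integrand_commute:
  assumes Bm: "\<And>\<alpha> \<beta>. Bm \<alpha> \<beta> x = Bm \<beta> \<alpha> x" and Lm: "\<And>\<alpha> \<beta>. Lm \<alpha> \<beta> x = Lm \<beta> \<alpha> x"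
  shows "RE_integrand \<Omega> u lam \<zeta> \<kappa> Bv Bm Lm z \<phi> \<psi> x = RE_integrand \<Omega> u lam \<zeta> \<kappa> Bv Bm Lm z \<psi> \<phi> x"
proof -
  let ?X = "\<lambda>a w. Xf \<Omega> u z a w x"
  let ?r = "\<lambda>w \<alpha>. rho w \<alpha> x - chem u z \<alpha> x / temp u z x * ent w x"
  have "(\<Sum>a\<in>UNIV. \<Sum>b\<in>UNIV. Bfrak \<kappa> (temp u z) Bv Bm a b x * (?X a \<phi> \<bullet> ?X b \<psi>))
      = (\<Sum>a\<in>UNIV. \<Sum>b\<in>UNIV. Bfrak \<kappa> (temp u z) Bv Bm a b x * (?X b \<phi> \<bullet> ?X a \<psi>))"
    by (rule quadratic_form_swap) (rule Bfrak_commute[where Bm=Bm and x=x, OF Bm])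
  then have "(\<Sum>a\<in>UNIV. \<Sum>b\<in>UNIV. Bfrak \<kappa> (temp u z) Bv Bm a b x * (?X a \<phi> \<bullet> ?X b \<psi>))
      = (\<Sum>a\<in>UNIV. \<Sum>b\<in>UNIV. Bfrak \<kappa> (temp u z) Bv Bm a b x * (?X a \<psi> \<bullet> ?X b \<phi>))"
    by (simp only: inner_commute)
  moreover have "(\<Sum>\<alpha>\<in>UNIV. \<Sum>\<beta>\<in>UNIV. ?r \<phi> \<alpha> * Lm \<alpha> \<beta> x * ?r \<psi> \<beta>)
      = (\<Sum>\<alpha>\<in>UNIV. \<Sum>\<beta>\<in>UNIV. ?r \<psi> \<alpha> * Lm \<alpha> \<beta> x * ?r \<phi> \<beta>)"
    using quadratic_form_swap[where c="\<lambda>\<alpha> \<beta>. Lm \<alpha> \<beta> x" and S=UNIV and h="\<lambda>\<alpha> \<beta>. ?r \<phi> \<alpha> * ?r \<psi> \<beta>"] Lm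
    by (simp add: mult_ac)
  ultimately show ?thesis
    unfolding RE_integrand_def Let_def by (subst trace_mul_sym) (simp add: mult_ac)
qed

lemma RE_integrand_nonneg:
  assumes T: "temp u z x > 0" and "\<zeta> x \<ge> 0" "lam x \<ge> 0"
    and Bfrak_psd: "\<And>\<xi>. (\<Sum>a\<in>UNIV. \<Sum>b\<in>UNIV. \<xi> a * Bfrak \<kappa> (temp u z) Bv Bm a b x * \<xi> b) \<ge> 0"
    and Lm_psd: "\<And>\<xi>. (\<Sum>\<alpha>\<in>UNIV. \<Sum>\<beta>\<in>UNIV. \<xi> \<alpha> * Lm \<alpha> \<beta> x * \<xi> \<beta>) \<ge> 0"
  shows "RE_integrand \<Omega> u lam \<zeta> \<kappa> Bv Bm Lm z \<phi> \<phi> x \<ge> 0"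
proof -
  have "0 \<le> (\<Sum>a\<in>UNIV. \<Sum>b\<in>UNIV. Bfrak \<kappa> (temp u z) Bv Bm a b x * (Xf \<Omega> u z a \<phi> x \<bullet> Xf \<Omega> u z b \<phi> x))"
    by (rule psd_quadratic_form_inner_nonneg) (rule Bfrak_psd)
  moreover have "0 \<le> temp u z x * (\<Sum>\<alpha>\<in>UNIV. \<Sum>\<beta>\<in>UNIV.
      (rho \<phi> \<alpha> x - chem u z \<alpha> x / temp u z x * ent \<phi> x) * Lm \<alpha> \<beta> x
      * (rho \<phi> \<beta> x - chem u z \<beta> x / temp u z x * ent \<phi> x))"
    using T Lm_psd by simp
  moreover have "0 \<le> \<zeta> x * temp u z x / 2 * trace (
        (grad_vec \<Omega> (mom \<phi>) x + transpose (grad_vec \<Omega> (mom \<phi>) x)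
          - (2 / temp u z x) *\<^sub>R (ent \<phi> x *\<^sub>R Dmat \<Omega> z x)) **
        (grad_vec \<Omega> (mom \<phi>) x + transpose (grad_vec \<Omega> (mom \<phi>) x)
          - (2 / temp u z x) *\<^sub>R (ent \<phi> x *\<^sub>R Dmat \<Omega> z x)))
      + temp u z x * (lam x - 2 * \<zeta> x / 3)
          * (divg \<Omega> (mom \<phi>) x - (1 / temp u z x) * divg \<Omega> (vel z) x * ent \<phi> x)
          * (divg \<Omega> (mom \<phi>) x - (1 / temp u z x) * divg \<Omega> (vel z) x * ent \<phi> x)"
    using viscous_form_nonneg[OF T assms(2,3), of "grad_vec \<Omega> (mom \<phi>) x" "ent \<phi> x"
        "grad_vec \<Omega> (vel z) x"]
    unfolding Dmat_def divg_def .
  ultimately show ?thesis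
    unfolding RE_integrand_def Let_def by linarith
qed

lemma RE_integrand_dH_eq_0:
  assumes T: "temp u z x \<noteq> 0"
    and X0: "Xf \<Omega> u z None (dH u z) x = 0" and X: "\<And>\<beta>. Xf \<Omega> u z (Some \<beta>) (dH u z) x = w"
    and Bv_sum: "(\<Sum>\<beta>\<in>UNIV. Bv \<beta> x) = 0" and Bm_sum: "\<And>\<alpha>. (\<Sum>\<beta>\<in>UNIV. Bm \<alpha> \<beta> x) = 0"
    and Lm_sum: "\<And>\<alpha>. (\<Sum>\<beta>\<in>UNIV. Lm \<alpha> \<beta> x) = 0"
  shows "RE_integrand \<Omega> u lam \<zeta> \<kappa> Bv Bm Lm z \<phi> (dH u z) x = 0"
proof -
  let ?r = "\<lambda>w \<alpha>. rho w \<alpha> x - chem u z \<alpha> x / temp u z x * ent w x"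
  have A0: "grad_vec \<Omega> (mom (dH u z)) x + transpose (grad_vec \<Omega> (mom (dH u z)) x)
      - (2 / temp u z x) *\<^sub>R (ent (dH u z) x *\<^sub>R Dmat \<Omega> z x) = 0"
    using T by (simp add: dH_def Dmat_def vec_eq_iff algebra_simps)
  have d0: "divg \<Omega> (mom (dH u z)) x - (1 / temp u z x) * divg \<Omega> (vel z) x * ent (dH u z) x = 0"
    using T by (simp add: dH_def)
  have "(\<Sum>b\<in>UNIV. Bfrak \<kappa> (temp u z) Bv Bm a b x
      * (Xf \<Omega> u z a \<phi> x \<bullet> Xf \<Omega> u z b (dH u z) x)) = 0" for a
  proof -
    have "(\<Sum>\<beta>\<in>UNIV. Bfrak \<kappa> (temp u z) Bv Bm a (Some \<beta>) x) = 0"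
      using Bv_sum Bm_sum by (cases a) (simp_all add: Bfrak_def)
    then show ?thesis
      by (simp add: sum_UNIV_option X0 X flip: sum_distrib_right)
  qed
  then have B0: "(\<Sum>a\<in>UNIV. \<Sum>b\<in>UNIV. Bfrak \<kappa> (temp u z) Bv Bm a b x
      * (Xf \<Omega> u z a \<phi> x \<bullet> Xf \<Omega> u z b (dH u z) x)) = 0"
    by simp
  have r: "?r (dH u z) \<beta> = - (vel z x \<bullet> vel z x) / 2" for \<beta>
    using T by (simp add: dH_def)
  have "(\<Sum>\<beta>\<in>UNIV. ?r \<phi> \<alpha> * Lm \<alpha> \<beta> x * ?r (dH u z) \<beta>)
      = ?r \<phi> \<alpha> * (- (vel z x \<bullet> vel z x) / 2) * (\<Sum>\<beta>\<in>UNIV. Lm \<alpha> \<beta> x)" for \<alpha>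
    unfolding r by (subst sum_distrib_left) (simp add: mult_ac)
  then have L0: "(\<Sum>\<alpha>\<in>UNIV. \<Sum>\<beta>\<in>UNIV. ?r \<phi> \<alpha> * Lm \<alpha> \<beta> x * ?r (dH u z) \<beta>) = 0"
    by (simp add: Lm_sum)
  show ?thesis
    unfolding RE_integrand_def Let_def A0 d0 B0 L0 by (simp add: trace_def)
qed

lemma Xf_dH_species:
  assumes "\<And>y. y \<in> \<Omega> \<Longrightarrow> temp u z y \<noteq> 0"
  shows "Xf \<Omega> u z (Some \<beta>) (dH u z) = wgrad \<Omega> (\<lambda>y. - (vel z y \<bullet> vel z y) / 2)"
  unfolding Xf_def using assms by (auto simp: dH_def intro: wgrad_cong)

lemma Xf_dH_entropy_AE_eq_0:
  assumes "open \<Omega>" and T: "\<And>y. y \<in> \<Omega> \<Longrightarrow> temp u z y \<noteq> 0"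
    and "\<exists>g. is_weak_grad \<Omega> (\<lambda>y. ent (dH u z) y / temp u z y) g"
  shows "AE x in lebesgue. x \<in> \<Omega> \<longrightarrow> Xf \<Omega> u z None (dH u z) x = 0"
  using weak_grad_AE_eq_0_if_const[OF assms(1) is_weak_grad_wgrad[OF assms(3)], of 1] T
  by (simp add: Xf_def dH_def)

theorem lemma4p2:
  fixes \<Omega> :: "pt set"
    and u :: "real^'k::finite \<Rightarrow> real \<Rightarrow> real"
    and z :: "'k fld"
    and lam \<zeta> \<kappa> :: "pt \<Rightarrow> real"
    and Bv :: "'k \<Rightarrow> pt \<Rightarrow> real"
    and Bm Lm :: "'k \<Rightarrow> 'k \<Rightarrow> pt \<Rightarrow> real"
    and \<epsilon> :: real
  assumes nu: "CARD('k) \<ge> 2"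
    and dom: "lipschitz_domain \<Omega>"
    and u_smooth: "smooth_fun (\<lambda>(r, t). u r t)"
    and eps: "\<epsilon> > 0"
    and L_int: "\<And>\<alpha> \<beta>. Lp \<Omega> (1 + \<epsilon>) (Lm \<alpha> \<beta>)"
    and lam_int: "Lp \<Omega> (3 + \<epsilon>) lam"
    and zeta_int: "Lp \<Omega> (3 + \<epsilon>) \<zeta>"
    and kappa_int: "Lp \<Omega> (3 + \<epsilon>) \<kappa>"
    and Bv_int: "\<And>\<alpha>. Lp \<Omega> (3 + \<epsilon>) (Bv \<alpha>)"
    and Bm_int: "\<And>\<alpha> \<beta>. Lp \<Omega> (3 + \<epsilon>) (Bm \<alpha> \<beta>)"
    and z_W13: "in_W13 \<Omega> z"
    and z_pos: "\<exists>rmin>0. AE x in lebesgue. x \<in> \<Omega> \<longrightarrow> total_rho z x \<ge> rmin"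
    and regular_grad: "\<And>\<phi>. in_W13 \<Omega> \<phi> \<Longrightarrow>
          (\<exists>g. is_weak_grad \<Omega> (\<lambda>y. ent \<phi> y / temp u z y) g) \<and>
          (\<forall>\<alpha>. \<exists>g. is_weak_grad \<Omega> (\<lambda>y. rho \<phi> \<alpha> y - chem u z \<alpha> y * ent \<phi> y / temp u z y) g)"
    and regular_int: "\<And>\<phi> \<psi>. in_W13 \<Omega> \<phi> \<Longrightarrow> in_W13 \<Omega> \<psi> \<Longrightarrow>
          set_integrable lebesgue \<Omega> (RE_integrand \<Omega> u lam \<zeta> \<kappa> Bv Bm Lm z \<phi> \<psi>)"
    and T_pos: "\<And>x. x \<in> \<Omega> \<Longrightarrow> temp u z x > 0"
    and zeta_nn: "\<And>x. x \<in> \<Omega> \<Longrightarrow> \<zeta> x \<ge> 0"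
    and lam_nn: "\<And>x. x \<in> \<Omega> \<Longrightarrow> lam x \<ge> 0"
    and Bm_sym: "\<And>x \<alpha> \<beta>. x \<in> \<Omega> \<Longrightarrow> Bm \<alpha> \<beta> x = Bm \<beta> \<alpha> x"
    and Lm_sym: "\<And>x \<alpha> \<beta>. x \<in> \<Omega> \<Longrightarrow> Lm \<alpha> \<beta> x = Lm \<beta> \<alpha> x"
    and Bfrak_psd: "\<And>x \<xi>. x \<in> \<Omega> \<Longrightarrow>
          (\<Sum>a\<in>UNIV. \<Sum>b\<in>UNIV. \<xi> a * Bfrak \<kappa> (temp u z) Bv Bm a b x * \<xi> b) \<ge> 0"
    and Lm_psd: "\<And>x \<xi>. x \<in> \<Omega> \<Longrightarrow> (\<Sum>\<alpha>\<in>UNIV. \<Sum>\<beta>\<in>UNIV. \<xi> \<alpha> * Lm \<alpha> \<beta> x * \<xi> \<beta>) \<ge> 0"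
    and Bv_sum: "\<And>x. x \<in> \<Omega> \<Longrightarrow> (\<Sum>\<beta>\<in>UNIV. Bv \<beta> x) = 0"
    and Bm_sum: "\<And>x \<alpha>. x \<in> \<Omega> \<Longrightarrow> (\<Sum>\<beta>\<in>UNIV. Bm \<alpha> \<beta> x) = 0"
    and Lm_sum: "\<And>x \<alpha>. x \<in> \<Omega> \<Longrightarrow> (\<Sum>\<beta>\<in>UNIV. Lm \<alpha> \<beta> x) = 0"
    and dH_W13: "in_W13 \<Omega> (dH u z)"
  shows "(\<forall>\<phi> \<psi>. in_W13 \<Omega> \<phi> \<and> in_W13 \<Omega> \<psi> \<longrightarrow>
            RE \<Omega> u lam \<zeta> \<kappa> Bv Bm Lm z \<phi> \<psi> = RE \<Omega> u lam \<zeta> \<kappa> Bv Bm Lm z \<psi> \<phi>)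
       \<and> (\<forall>\<phi>. in_W13 \<Omega> \<phi> \<longrightarrow> RE \<Omega> u lam \<zeta> \<kappa> Bv Bm Lm z \<phi> \<phi> \<ge> 0)
       \<and> (\<forall>\<phi>. in_W13 \<Omega> \<phi> \<longrightarrow> RE \<Omega> u lam \<zeta> \<kappa> Bv Bm Lm z \<phi> (dH u z) = 0)"
proof -
  \<comment> \<open>All three identities hold pointwise on \<open>\<Omega>\<close>; of the integrability and regularity
    hypotheses only the existence of the weak gradient \<open>X\<^sub>0(\<delta>H/\<delta>z)\<close> is needed.\<close>
  have "open \<Omega>"
    using dom by (simp add: lipschitz_domain_def)
  then have \<Omega>: "\<Omega> \<in> sets lebesgue"
    by (intro sets_completionI_sets) simp
  have T: "\<And>y. y \<in> \<Omega> \<Longrightarrow> temp u z y \<noteq> 0"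
    using T_pos by fastforce
  have "AE x in lebesgue. x \<in> \<Omega> \<longrightarrow> Xf \<Omega> u z None (dH u z) x = 0"
    using Xf_dH_entropy_AE_eq_0[OF \<open>open \<Omega>\<close> T] regular_grad[OF dH_W13] by blast
  then have dH_AE: "AE x in lebesgue. x \<in> \<Omega> \<longrightarrow> RE_integrand \<Omega> u lam \<zeta> \<kappa> Bv Bm Lm z \<phi> (dH u z) x = 0"
    for \<phi>
    by eventually_elim
      (auto intro!: RE_integrand_dH_eq_0[where w="wgrad \<Omega> (\<lambda>y. - (vel z y \<bullet> vel z y) / 2) _"]
        T Bv_sum Bm_sum Lm_sum simp: Xf_dH_species[OF T])
  show ?thesis
    unfolding RE_def
    using \<Omega> Bm_sym Lm_sym T_pos zeta_nn lam_nn Bfrak_psd Lm_psd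
    by (auto intro!: set_lebesgue_integral_cong RE_integrand_commute set_lebesgue_integral_nonneg
        RE_integrand_nonneg set_lebesgue_integral_eq_0_AE dH_AE)
qed

end
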